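(* Let $X$ be an admissible complete CAT(1) space and $T\colon X\to X$ a firmly vicinal mapping. If $\mathrm{Fix}(T)$ is nonempty, then for each $x\in X$ the sequence $\{T^nx\}$ is $\Delta$-convergent to an element of $\mathrm{Fix}(T)$.
   Context: A CAT(1) space is a $\pi$-geodesic metric space in which every geodesic triangle of perimeter $<2\pi$ satisfies the CAT(1) comparison inequality relative to comparison triangles in the unit sphere $\mathbb S^2$; it is admissible if $d(v,v')<\pi/2$ for all $v,v'$. The asymptotic center of $\{x_n\}$ is $\mathrm{AC}(\{x_n\})=\{z:\limsup_n d(x_n,z)=\inf_{y}\limsup_n d(x_n,y)\}$; $\{x_n\}$ is $\Delta$-convergent to $p$ if $\mathrm{AC}(\{x_{n_i}\})=\{p\}$ for every subsequence $\{x_{n_i}\}$. With $C_z=\cos d(Tz,z)$, $T$ is firmly vicinal if for all $x,y\in X$: $\bigl(C_x^2(1+C_y^2)C_y+C_y^2(1+C_x^2)C_x\bigr)\cos d(Tx,Ty)\ge C_x^2(1+C_y^2)\cos d(Tx,y)+C_y^2(1+C_x^2)\cos d(Ty,x)$. *)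

theory Defs
  imports "HOL-Analysis.Analysis"
begin

definition S2 :: "(real^3) set" where
  "S2 = {u. norm u = 1}"

definition sdist :: "real^3 \<Rightarrow> real^3 \<Rightarrow> real" where
  "sdist u v = arccos (u \<bullet> v)"

definition geodesic_in :: "'a::metric_space set \<Rightarrow> (real \<Rightarrow> 'a) \<Rightarrow> 'a \<Rightarrow> 'a \<Rightarrow> bool" where
  "geodesic_in X g x y \<longleftrightarrow>
     g 0 = x \<and> g (dist x y) = y \<and> (\<forall>s\<in>{0..dist x y}. g s \<in> X) \<and>
     (\<forall>s\<in>{0..dist x y}. \<forall>t\<in>{0..dist x y}. dist (g s) (g t) = \<bar>s - t\<bar>)"

definition pi_geodesic :: "'a::metric_space set \<Rightarrow> bool" where
  "pi_geodesic X \<longleftrightarrow> (\<forall>x\<in>X. \<forall>y\<in>X. dist x y < pi \<longrightarrow> (\<exists>g. geodesic_in X g x y))"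

definition comp_point :: "real^3 \<Rightarrow> real^3 \<Rightarrow> real \<Rightarrow> real^3 \<Rightarrow> bool" where
  "comp_point u' v' t p' \<longleftrightarrow> p' \<in> S2 \<and> sdist u' p' = t \<and> sdist p' v' = sdist u' v' - t"

definition cat1_inequality :: "'a::metric_space set \<Rightarrow> bool" where
  "cat1_inequality X \<longleftrightarrow>
    (\<forall>a b c gab gbc gca.
       a \<in> X \<and> b \<in> X \<and> c \<in> X \<and>
       geodesic_in X gab a b \<and> geodesic_in X gbc b c \<and> geodesic_in X gca c a \<and>
       dist a b + dist b c + dist c a < 2 * pi \<longrightarrow>
       (\<forall>a' b' c'. a' \<in> S2 \<and> b' \<in> S2 \<and> c' \<in> S2 \<and>
          sdist a' b' = dist a b \<and> sdist b' c' = dist b c \<and> sdist c' a' = dist c a \<longrightarrow>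
          (let sides = {(gab, a', b', dist a b), (gbc, b', c', dist b c), (gca, c', a', dist c a)}
           in \<forall>(g, u', v', l) \<in> sides. \<forall>(h, w', z', m) \<in> sides.
                \<forall>s\<in>{0..l}. \<forall>t\<in>{0..m}. \<forall>p' q'.
                  comp_point u' v' s p' \<and> comp_point w' z' t q' \<longrightarrow>
                  dist (g s) (h t) \<le> sdist p' q')))"

definition CAT1 :: "'a::metric_space set \<Rightarrow> bool" where
  "CAT1 X \<longleftrightarrow> pi_geodesic X \<and> cat1_inequality X"

definition admissible :: "'a::metric_space set \<Rightarrow> bool" where
  "admissible X \<longleftrightarrow> (\<forall>v\<in>X. \<forall>v'\<in>X. dist v v' < pi / 2)"

definition asymptotic_center :: "'a::metric_space set \<Rightarrow> (nat \<Rightarrow> 'a) \<Rightarrow> 'a set" where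
  "asymptotic_center X xs =
     {z \<in> X. limsup (\<lambda>n. ereal (dist (xs n) z)) =
             (INF y\<in>X. limsup (\<lambda>n. ereal (dist (xs n) y)))}"

definition Delta_convergent :: "'a::metric_space set \<Rightarrow> (nat \<Rightarrow> 'a) \<Rightarrow> 'a \<Rightarrow> bool" where
  "Delta_convergent X xs p \<longleftrightarrow>
     (\<forall>r::nat \<Rightarrow> nat. strict_mono r \<longrightarrow> asymptotic_center X (xs \<circ> r) = {p})"

definition firmly_vicinal :: "'a::metric_space set \<Rightarrow> ('a \<Rightarrow> 'a) \<Rightarrow> bool" where
  "firmly_vicinal X T \<longleftrightarrow>
    (\<forall>x\<in>X. \<forall>y\<in>X.
      (let Cx = cos (dist (T x) x); Cy = cos (dist (T y) y) in
        (Cx^2 * (1 + Cy^2) * Cy + Cy^2 * (1 + Cx^2) * Cx) * cos (dist (T x) (T y))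
        \<ge> Cx^2 * (1 + Cy^2) * cos (dist (T x) y) + Cy^2 * (1 + Cx^2) * cos (dist (T y) x)))"

definition Fix :: "'a set \<Rightarrow> ('a \<Rightarrow> 'a) \<Rightarrow> 'a set" where
  "Fix X T = {z \<in> X. T z = z}"

end

theory Submission
  imports Defs
begin

text \<open>The asymptotic radius \<open>r(z) = limsup d(x\<^sub>n, z)\<close> of a sequence in an admissible CAT(1)
  space inherits from spherical comparison triangles the midpoint inequality
  \<open>cos r(u) + cos r(v) \<le> 2 cos (d(u,v)/2) cos r(m)\<close>. Hence almost-minimisers of \<open>r\<close> form a
  Cauchy sequence, and in a complete space every sequence with \<open>r < \<pi>/2\<close> somewhere has a
  unique asymptotic center.

  For a firmly vicinal \<open>T\<close> and a fixed point \<open>q\<close>, the defining inequality reduces to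
  \<open>cos d(x,q) \<le> cos d(Tx,x) cos d(Tx,q)\<close>: the orbit is Fejer monotone with respect to
  \<open>Fix T\<close> and asymptotically regular. If \<open>z\<close> is the asymptotic center of a subsequence, the
  defining inequality at \<open>(x\<^sub>n, z)\<close> together with \<open>d(Tx\<^sub>n, x\<^sub>n) \<rightarrow> 0\<close> gives
  \<open>r(Tz) \<le> r(z)\<close>, so \<open>z\<close> is fixed. Finally \<open>r(p) = lim d(x\<^sub>n, p)\<close>
  does not depend on the subsequence for fixed \<open>p\<close>, which forces all these centers to
  coincide.\<close>

section \<open>Spherical comparison and the CAT(1) midpoint inequality\<close>

lemma inner_vector_3:
  "(vector [a, b, c] :: real^3) \<bullet> vector [d, e, f] = a * d + b * e + c * f"
  by (simp add: inner_vec_def sum_3 vector_3)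

lemma S2_iff_inner_self: "(u::real^3) \<in> S2 \<longleftrightarrow> u \<bullet> u = 1"
  by (simp add: S2_def norm_eq_sqrt_inner)

lemma spherical_law_of_cosines_angle_exists:
  fixes d b c :: real
  assumes "0 \<le> d" "0 \<le> b" "d + b \<le> pi" "\<bar>d - b\<bar> \<le> c" "c \<le> d + b"
  shows "\<exists>k. -1 \<le> k \<and> k \<le> 1 \<and> cos c = cos d * cos b + sin d * sin b * k"
proof (cases "d = 0 \<or> b = 0")
  case True
  then have "c = d + b" using assms by auto
  with True show ?thesis by (intro exI[of _ 0]) auto
next
  case False
  have "sin d > 0" "sin b > 0" using False assms by (auto intro: sin_gt_zero)
  then have sin_pos: "sin d * sin b > 0" by simp
  define k where "k = (cos c - cos d * cos b) / (sin d * sin b)"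
  have eq: "cos c = cos d * cos b + sin d * sin b * k"
    using \<open>sin d > 0\<close> \<open>sin b > 0\<close> by (simp add: k_def field_simps)
  have "cos (d + b) \<le> cos c" using assms by (intro cos_monotone_0_pi_le) auto
  then have "sin d * sin b * (-1) \<le> sin d * sin b * k" using eq by (simp add: cos_add)
  then have "-1 \<le> k" using sin_pos by (simp only: mult_le_cancel_left_pos)
  moreover have "cos c \<le> cos \<bar>d - b\<bar>" using assms by (intro cos_monotone_0_pi_le) auto
  then have "sin d * sin b * k \<le> sin d * sin b * 1" using eq by (simp add: cos_diff cos_abs_real)
  then have "k \<le> 1" using sin_pos by (simp only: mult_le_cancel_left_pos)
  ultimately show ?thesis using eq by blast
qed

lemma sdist_eqI: "0 \<le> t \<Longrightarrow> t \<le> pi \<Longrightarrow> u \<bullet> v = cos t \<Longrightarrow> sdist u v = t"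
  by (simp add: sdist_def arccos_cos)

text \<open>The comparison triangle is placed with vertices
  \<open>a' = e\<^sub>1\<close> and \<open>b'\<close> on the equator, and \<open>c'\<close> at angle \<open>arccos k\<close> from the equatorial plane
  at \<open>a'\<close>; the midpoint identity is then the half-angle formula.\<close>

lemma spherical_triangle_with_midpoint:
  fixes d b c :: real
  assumes "0 \<le> d" "0 \<le> b" "d + b \<le> pi" "\<bar>d - b\<bar> \<le> c" "c \<le> d + b"
  shows "\<exists>a' b' c' p'. a' \<in> S2 \<and> b' \<in> S2 \<and> c' \<in> S2 \<and>
           sdist a' b' = d \<and> sdist b' c' = c \<and> sdist c' a' = b \<and>
           comp_point a' b' (d/2) p' \<and> cos b + cos c = 2 * cos (d/2) * (p' \<bullet> c')"
proof -
  obtain k where k: "-1 \<le> k" "k \<le> 1" "cos c = cos d * cos b + sin d * sin b * k"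
    using spherical_law_of_cosines_angle_exists[OF assms] by blast
  define a' :: "real^3" where "a' = vector [1, 0, 0]"
  define b' :: "real^3" where "b' = vector [cos d, sin d, 0]"
  define p' :: "real^3" where "p' = vector [cos (d/2), sin (d/2), 0]"
  define c' :: "real^3" where "c' = vector [cos b, sin b * k, sin b * sqrt (1 - k\<^sup>2)]"
  have "c' \<bullet> c' = (cos b)\<^sup>2 + (sin b)\<^sup>2 * (k\<^sup>2 + sqrt (1 - k\<^sup>2) ^ 2)"
    by (simp add: c'_def inner_vector_3 power2_eq_square algebra_simps)
  also have "\<dots> = 1" using k by (simp add: abs_square_le_1)
  finally have "c' \<bullet> c' = 1" .
  then have S2: "a' \<in> S2" "b' \<in> S2" "p' \<in> S2" "c' \<in> S2"
    by (simp_all add: S2_iff_inner_self a'_def b'_def p'_def inner_vector_3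
        power2_eq_square[symmetric])
  have "p' \<bullet> b' = cos d * cos (d/2) + sin d * sin (d/2)"
    by (simp add: p'_def b'_def inner_vector_3 mult.commute)
  also have "\<dots> = cos (d/2)" using cos_diff[of d "d/2"] by simp
  finally have "sdist p' b' = d/2" using assms by (intro sdist_eqI) auto
  moreover have "sdist a' p' = d/2"
    using assms by (intro sdist_eqI) (auto simp: a'_def p'_def inner_vector_3)
  moreover have sides: "sdist a' b' = d" "sdist c' a' = b" "sdist b' c' = c"
    using assms k(3) by (auto intro!: sdist_eqI simp: a'_def b'_def c'_def inner_vector_3)
  ultimately have "comp_point a' b' (d/2) p'" using S2 by (simp add: comp_point_def)
  moreover have "2 * cos (d/2) * (p' \<bullet> c') = (1 + cos d) * cos b + sin d * sin b * k"
    using cos_double_cos[of "d/2"] sin_double[of "d/2"]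
    by (simp add: p'_def c'_def inner_vector_3 power2_eq_square algebra_simps)
  ultimately show ?thesis using S2 sides k(3)
    by (intro exI[of _ a'] exI[of _ b'] exI[of _ c'] exI[of _ p']) (simp add: algebra_simps)
qed

lemma cat1_dist_side_point_vertex:
  assumes "cat1_inequality X" "a \<in> X" "b \<in> X" "c \<in> X"
    and "geodesic_in X gab a b" "geodesic_in X gbc b c" "geodesic_in X gca c a"
    and "dist a b + dist b c + dist c a < 2 * pi"
    and "a' \<in> S2" "b' \<in> S2" "c' \<in> S2"
    and "sdist a' b' = dist a b" "sdist b' c' = dist b c" "sdist c' a' = dist c a"
    and "s \<in> {0..dist a b}" "comp_point a' b' s p'"
  shows "dist (gab s) c \<le> sdist p' c'"
proof -
  have "comp_point c' a' 0 c'" "gca 0 = c"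
    using assms by (auto simp: comp_point_def sdist_def S2_iff_inner_self geodesic_in_def)
  with assms show ?thesis
    unfolding cat1_inequality_def Let_def
    by (elim allE[of _ a] allE[of _ b] allE[of _ c] allE[of _ gab] allE[of _ gbc] allE[of _ gca]
        allE[of _ a'] allE[of _ b'] allE[of _ c']) fastforce
qed

lemma cat1_cos_midpoint_ineq:
  assumes "CAT1 X" "admissible X" "u \<in> X" "v \<in> X"
  shows "\<exists>m\<in>X. \<forall>z\<in>X. cos (dist u z) + cos (dist v z) \<le> 2 * cos (dist u v / 2) * cos (dist m z)"
proof -
  have dist_lt: "dist a b < pi/2" if "a \<in> X" "b \<in> X" for a b
    using assms(2) that by (auto simp: admissible_def)
  have geodesic: "\<exists>g. geodesic_in X g a b" if "a \<in> X" "b \<in> X" for a b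
  proof -
    have "dist a b < pi" using dist_lt[OF that] zero_le_dist[of a b] by linarith
    then show ?thesis using assms(1) that by (auto simp: CAT1_def pi_geodesic_def)
  qed
  obtain g where g: "geodesic_in X g u v" using geodesic assms by blast
  define d where "d = dist u v"
  have "g (d/2) \<in> X" using g by (auto simp: geodesic_in_def d_def)
  moreover have "cos (dist u z) + cos (dist v z) \<le> 2 * cos (d/2) * cos (dist (g (d/2)) z)"
    if z: "z \<in> X" for z
  proof -
    obtain h1 h2 where h: "geodesic_in X h1 v z" "geodesic_in X h2 z u"
      using geodesic assms z by metis
    have "0 \<le> d" "0 \<le> dist z u" "d + dist z u \<le> pi" "\<bar>d - dist z u\<bar> \<le> dist v z" "dist v z \<le> d + dist z u"
      using dist_lt[of u v] dist_lt[of z u] assms z dist_triangle[of v z u] dist_triangle[of u v z]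
        dist_triangle[of z u v] by (auto simp: d_def dist_commute)
    then obtain a' b' c' p' where abc: "a' \<in> S2" "b' \<in> S2" "c' \<in> S2"
        "sdist a' b' = d" "sdist b' c' = dist v z" "sdist c' a' = dist z u"
      and p': "comp_point a' b' (d/2) p'"
      and mid: "cos (dist z u) + cos (dist v z) = 2 * cos (d/2) * (p' \<bullet> c')"
      using spherical_triangle_with_midpoint[of d "dist z u" "dist v z"] by blast
    have "dist u v + dist v z + dist z u < 2 * pi"
      using dist_lt[OF assms(3,4)] dist_lt[OF assms(4) z] dist_lt[OF z assms(3)] pi_gt_zero by linarith
    then have "dist (g (d/2)) z \<le> arccos (p' \<bullet> c')"
      using cat1_dist_side_point_vertex[OF _ assms(3,4) z g h _ abc[unfolded d_def] _ p'[unfolded d_def]]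
        assms(1) \<open>0 \<le> d\<close> by (simp add: CAT1_def d_def sdist_def)
    moreover have "\<bar>p' \<bullet> c'\<bar> \<le> 1"
      using Cauchy_Schwarz_ineq2[of p' c'] abc p' by (auto simp: S2_def comp_point_def)
    moreover have "dist (g (d/2)) z \<le> pi"
      using dist_lt[OF \<open>g (d/2) \<in> X\<close> z] zero_le_dist[of "g (d/2)" z] by linarith
    ultimately have "p' \<bullet> c' \<le> cos (dist (g (d/2)) z)"
      using cos_monotone_0_pi_le[of "dist (g (d/2)) z" "arccos (p' \<bullet> c')"] arccos_ubound[of "p' \<bullet> c'"]
      by (auto simp: abs_le_iff)
    moreover have "0 \<le> cos (d/2)"
      using \<open>0 \<le> d\<close> dist_lt[OF assms(3,4)] pi_gt_zero
      unfolding d_def by (intro cos_ge_zero) linarith+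
    ultimately show ?thesis using mid by (simp add: dist_commute mult_left_mono)
  qed
  ultimately show ?thesis by (auto simp: d_def)
qed

section \<open>Limits superior of bounded real sequences\<close>

lemma abs_cos_diff_le: "\<bar>cos a - cos b\<bar> \<le> \<bar>a - b\<bar>" for a b :: real
proof -
  have "\<bar>cos a - cos b\<bar> = 2 * \<bar>sin ((a + b) / 2)\<bar> * \<bar>sin ((b - a) / 2)\<bar>"
    by (simp add: cos_diff_cos abs_mult)
  also have "\<dots> \<le> 2 * 1 * \<bar>(b - a) / 2\<bar>"
    by (intro mult_mono abs_sin_x_le_abs_x) auto
  finally show ?thesis by simp
qed

lemma cos_dist_diff_le: "cos (dist a c) - cos (dist b c) \<le> dist a b"
proof -
  have "\<bar>dist a c - dist b c\<bar> \<le> dist a b"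
    using dist_triangle[of a c b] dist_triangle[of b c a] by (simp add: dist_commute abs_le_iff)
  then show ?thesis using abs_cos_diff_le[of "dist a c" "dist b c"] by linarith
qed

text \<open>\<open>real_of_ereal\<close> sends \<open>\<plusminus>\<infinity>\<close> to \<open>0\<close>; every lemma below therefore assumes the
  sequence to be bounded.\<close>

definition real_limsup :: "(nat \<Rightarrow> real) \<Rightarrow> real" where
  "real_limsup f = real_of_ereal (limsup (\<lambda>n. ereal (f n)))"

lemma
  assumes "\<And>n. A \<le> f n" "\<And>n. f n \<le> B"
  shows limsup_ereal_eq_real_limsup: "limsup (\<lambda>n. ereal (f n)) = ereal (real_limsup f)"
    and real_limsup_ge: "A \<le> real_limsup f"
    and real_limsup_le: "real_limsup f \<le> B"
proof -
  have "limsup (\<lambda>n. ereal A) \<le> limsup (\<lambda>n. ereal (f n))"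
    "limsup (\<lambda>n. ereal (f n)) \<le> limsup (\<lambda>n. ereal B)"
    by (rule Limsup_mono, use assms in auto)+
  then have "ereal A \<le> limsup (\<lambda>n. ereal (f n))" "limsup (\<lambda>n. ereal (f n)) \<le> ereal B"
    by (simp_all add: Limsup_const)
  then obtain r where "limsup (\<lambda>n. ereal (f n)) = ereal r" "A \<le> r" "r \<le> B"
    by (cases "limsup (\<lambda>n. ereal (f n))") auto
  then show "limsup (\<lambda>n. ereal (f n)) = ereal (real_limsup f)" "A \<le> real_limsup f" "real_limsup f \<le> B"
    by (simp_all add: real_limsup_def)
qed

lemma eventually_less_if_real_limsup_less:
  assumes "\<And>n. A \<le> f n" "\<And>n. f n \<le> B" "real_limsup f < t"
  shows "eventually (\<lambda>n. f n < t) sequentially"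
proof -
  have "limsup (\<lambda>n. ereal (f n)) < ereal t"
    using limsup_ereal_eq_real_limsup[OF assms(1,2)] assms(3) by simp
  from Limsup_lessD[OF this] show ?thesis by simp
qed

lemma exists_greater_if_less_real_limsup:
  assumes "\<And>n. A \<le> f n" "\<And>n. f n \<le> B" "t < real_limsup f"
  shows "\<exists>n\<ge>N. t < f n"
proof -
  have "ereal t < limsup (\<lambda>n. ereal (f (n + N)))"
    using limsup_ereal_eq_real_limsup[OF assms(1,2)] limsup_shift_k[of "\<lambda>n. ereal (f n)" N] assms(3)
    by simp
  then obtain i where "t < f (i + N)" using Limsup_obtain by fastforce
  then show ?thesis by (intro exI[of _ "i + N"]) auto
qed

lemma real_limsup_eq_lim: "f \<longlonglongrightarrow> L \<Longrightarrow> real_limsup f = L"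
  using lim_imp_Limsup[OF trivial_limit_sequentially tendsto_ereal]
  by (simp add: real_limsup_def)

lemma real_limsup_le_add:
  assumes f: "\<And>n. A \<le> f n" "\<And>n. f n \<le> B" and g: "\<And>n. A \<le> g n" "\<And>n. g n \<le> B"
    and le: "\<And>n. f n \<le> g n + D"
  shows "real_limsup f \<le> real_limsup g + D"
proof (rule ccontr)
  assume "\<not> real_limsup f \<le> real_limsup g + D"
  then have gap: "real_limsup g + D < real_limsup f" by simp
  define t where "t = (real_limsup f + real_limsup g + D) / 2"
  obtain N where "\<And>n. n \<ge> N \<Longrightarrow> g n < t - D"
    using eventually_less_if_real_limsup_less[where f=g and t="t - D", OF g] gap
    by (auto simp: t_def eventually_sequentially)
  moreover obtain n where "n \<ge> N" "t < f n"
    using exists_greater_if_less_real_limsup[where f=f and t=t and N=N, OF f] gap by (auto simp: t_def)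
  ultimately show False using le[of n] by force
qed

lemma eventually_cos_real_limsup_le:
  assumes f: "\<And>n. 0 \<le> f n" "\<And>n. f n \<le> pi" and e: "e > 0"
  shows "eventually (\<lambda>n. cos (real_limsup f) - e \<le> cos (f n)) sequentially"
proof (rule eventually_mono)
  show "eventually (\<lambda>n. f n < real_limsup f + e) sequentially"
    using eventually_less_if_real_limsup_less[where f=f and t="real_limsup f + e", OF f] e by simp
next
  fix n assume n: "f n < real_limsup f + e"
  have "0 \<le> real_limsup f" "real_limsup f \<le> pi" using real_limsup_ge[OF f] real_limsup_le[OF f] .
  then show "cos (real_limsup f) - e \<le> cos (f n)"
    using f[of n] e n cos_monotone_0_pi_le[of "f n" "real_limsup f"] abs_cos_diff_le[of "real_limsup f" "f n"]
    by (cases "f n \<le> real_limsup f") auto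
qed

lemma exists_cos_le_cos_real_limsup:
  assumes f: "\<And>n. 0 \<le> f n" "\<And>n. f n \<le> pi" and e: "e > 0"
  shows "\<exists>n\<ge>N. cos (f n) \<le> cos (real_limsup f) + e"
proof -
  obtain n where n: "n \<ge> N" "real_limsup f - e < f n"
    using exists_greater_if_less_real_limsup[where f=f and t="real_limsup f - e" and N=N, OF f] e
    by auto
  have "0 \<le> real_limsup f" "real_limsup f \<le> pi" using real_limsup_ge[OF f] real_limsup_le[OF f] .
  then have "cos (f n) \<le> cos (real_limsup f) + e"
    using f[of n] e n cos_monotone_0_pi_le[of "real_limsup f" "f n"] abs_cos_diff_le[of "real_limsup f" "f n"]
    by (cases "real_limsup f \<le> f n") auto
  with n show ?thesis by blast
qed

lemma real_limsup_le_if_eventually_cos_le: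
  assumes f: "\<And>n. 0 \<le> f n" "\<And>n. f n \<le> pi" and g: "\<And>n. 0 \<le> g n" "\<And>n. g n \<le> pi"
    and cos_le: "\<And>e. e > 0 \<Longrightarrow> eventually (\<lambda>n. cos (g n) \<le> cos (f n) + e) sequentially"
  shows "real_limsup f \<le> real_limsup g"
proof -
  have three_e: "cos (real_limsup g) \<le> cos (real_limsup f) + 3 * e" if e: "e > 0" for e
  proof -
    obtain N where N: "\<And>n. n \<ge> N \<Longrightarrow> cos (real_limsup g) - e \<le> cos (g n) \<and> cos (g n) \<le> cos (f n) + e"
      using eventually_conj[OF eventually_cos_real_limsup_le[where f=g, OF g e] cos_le[OF e]]
      by (auto simp: eventually_sequentially)
    obtain n where "n \<ge> N" "cos (f n) \<le> cos (real_limsup f) + e"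
      using exists_cos_le_cos_real_limsup[where f=f, OF f e] by blast
    with N[of n] show ?thesis by linarith
  qed
  have "cos (real_limsup g) \<le> cos (real_limsup f) + e" if "e > 0" for e
    using that three_e[of "e/3"] by simp
  then have "cos (real_limsup g) \<le> cos (real_limsup f)" by (rule field_le_epsilon)
  then show ?thesis
    using cos_mono_le_eq real_limsup_ge[where f=f, OF f] real_limsup_le[where f=f, OF f]
      real_limsup_ge[where f=g, OF g] real_limsup_le[where f=g, OF g]
    by simp
qed

lemma Cauchy_if_one_minus_cos_half_dist_le:
  fixes u :: "nat \<Rightarrow> 'a::metric_space"
  assumes "\<And>j k. dist (u j) (u k) \<le> pi"
    and "\<And>N j k. N \<le> j \<Longrightarrow> N \<le> k \<Longrightarrow> 1 - cos (dist (u j) (u k) / 2) \<le> c / real (Suc N)"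
  shows "Cauchy u"
proof (rule metric_CauchyI)
  fix e :: real assume e: "0 < e"
  define e' where "e' = min e pi"
  have e': "0 < e'" "e' \<le> pi" "e' \<le> e" using e pi_gt_zero by (auto simp: e'_def)
  then have "0 < 1 - cos (e'/2)" using cos_monotone_0_pi[of 0 "e'/2"] by auto
  moreover have "(\<lambda>N. c / real (Suc N)) \<longlonglongrightarrow> 0"
    using LIMSEQ_Suc[OF lim_const_over_n[of c]] by simp
  ultimately have "eventually (\<lambda>N. c / real (Suc N) < 1 - cos (e'/2)) sequentially"
    by (rule order_tendstoD(2)[rotated])
  then obtain N where N: "c / real (Suc N) < 1 - cos (e'/2)"
    by (auto simp: eventually_sequentially)
  have "dist (u j) (u k) < e" if "N \<le> j" "N \<le> k" for j k
  proof -
    have "cos (e'/2) < cos (dist (u j) (u k) / 2)" using assms(2)[OF that] N by linarith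
    then have "dist (u j) (u k) / 2 < e'/2"
      using cos_mono_less_eq[of "e'/2" "dist (u j) (u k) / 2"] assms(1)[of j k] e' by simp
    then show ?thesis using e' by linarith
  qed
  then show "\<exists>M. \<forall>m\<ge>M. \<forall>n\<ge>M. dist (u m) (u n) < e" by blast
qed

lemma tendsto_zero_if_cos_le_cos_mult_cos:
  fixes a e :: "nat \<Rightarrow> real"
  assumes a: "a \<longlonglongrightarrow> L" "0 < cos L" "\<And>n. 0 < cos (a n)"
    and e: "\<And>n. 0 \<le> e n" "\<And>n. e n \<le> pi"
    and le: "\<And>n. cos (a n) \<le> cos (e n) * cos (a (Suc n))"
  shows "e \<longlonglongrightarrow> 0"
proof -
  have cos_a: "(\<lambda>n. cos (a n)) \<longlonglongrightarrow> cos L" using a(1) by (rule tendsto_cos)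
  have "(\<lambda>n. cos (a n) / cos (a (Suc n))) \<longlonglongrightarrow> cos L / cos L"
    using a(2) by (intro tendsto_divide cos_a LIMSEQ_Suc[OF cos_a]) auto
  moreover have "cos (a n) / cos (a (Suc n)) \<le> cos (e n)" for n
    using le[of n] a(3)[of "Suc n"] by (simp only: pos_divide_le_eq)
  ultimately have "(\<lambda>n. cos (e n)) \<longlonglongrightarrow> 1"
    using a(2) tendsto_sandwich[of "\<lambda>n. cos (a n) / cos (a (Suc n))" "\<lambda>n. cos (e n)" sequentially
        "\<lambda>_. 1" 1] by (simp add: always_eventually)
  then have "(\<lambda>n. arccos (cos (e n))) \<longlonglongrightarrow> arccos 1"
    by (rule continuous_on_tendsto_compose[OF continuous_on_arccos', unfolded comp_def]) auto
  then show ?thesis using e by (simp add: arccos_cos)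
qed

section \<open>Asymptotic centers in admissible CAT(1) spaces\<close>

definition asymptotic_radius :: "(nat \<Rightarrow> 'a::metric_space) \<Rightarrow> 'a \<Rightarrow> real" where
  "asymptotic_radius y w = real_limsup (\<lambda>n. dist (y n) w)"

lemma admissible_dist_le: "admissible X \<Longrightarrow> a \<in> X \<Longrightarrow> b \<in> X \<Longrightarrow> dist a b \<le> pi/2"
  by (auto simp: admissible_def intro: less_imp_le)

lemma admissible_dist_le_pi: "admissible X \<Longrightarrow> a \<in> X \<Longrightarrow> b \<in> X \<Longrightarrow> dist a b \<le> pi"
  using admissible_dist_le[of X a b] pi_gt_zero by linarith

context
  fixes X :: "'a::metric_space set" and y :: "nat \<Rightarrow> 'a"
  assumes adm: "admissible X" and y: "range y \<subseteq> X"
begin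

lemma dist_seq_bounds: "w \<in> X \<Longrightarrow> 0 \<le> dist (y n) w \<and> dist (y n) w \<le> pi/2"
  using admissible_dist_le[OF adm, of "y n" w] y by auto

lemma
  assumes "w \<in> X"
  shows limsup_dist_eq_asymptotic_radius:
      "limsup (\<lambda>n. ereal (dist (y n) w)) = ereal (asymptotic_radius y w)"
    and asymptotic_radius_nonneg: "0 \<le> asymptotic_radius y w"
    and asymptotic_radius_le: "asymptotic_radius y w \<le> pi/2"
  using limsup_ereal_eq_real_limsup[of 0 "\<lambda>n. dist (y n) w" "pi/2"]
    real_limsup_ge[of 0 "\<lambda>n. dist (y n) w" "pi/2"] real_limsup_le[of 0 "\<lambda>n. dist (y n) w" "pi/2"]
    dist_seq_bounds[OF assms]
  by (simp_all add: asymptotic_radius_def)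

lemma asymptotic_center_eq_minimizers:
  "asymptotic_center X y = {z \<in> X. \<forall>w\<in>X. asymptotic_radius y z \<le> asymptotic_radius y w}"
proof -
  have "(INF w\<in>X. limsup (\<lambda>n. ereal (dist (y n) w))) = (INF w\<in>X. ereal (asymptotic_radius y w))"
    using limsup_dist_eq_asymptotic_radius by (intro INF_cong) auto
  moreover have "ereal (asymptotic_radius y z) = (INF w\<in>X. ereal (asymptotic_radius y w)) \<longleftrightarrow>
      (\<forall>w\<in>X. asymptotic_radius y z \<le> asymptotic_radius y w)" if "z \<in> X" for z
  proof
    assume "ereal (asymptotic_radius y z) = (INF w\<in>X. ereal (asymptotic_radius y w))"
    then show "\<forall>w\<in>X. asymptotic_radius y z \<le> asymptotic_radius y w"
      by (metis INF_lower ereal_less_eq(3))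
  next
    assume "\<forall>w\<in>X. asymptotic_radius y z \<le> asymptotic_radius y w"
    then show "ereal (asymptotic_radius y z) = (INF w\<in>X. ereal (asymptotic_radius y w))"
      using that by (intro antisym INF_greatest INF_lower) auto
  qed
  ultimately show ?thesis
    by (auto simp: asymptotic_center_def limsup_dist_eq_asymptotic_radius)
qed

lemma asymptotic_radius_le_add_dist:
  assumes "u \<in> X" "w \<in> X"
  shows "asymptotic_radius y u \<le> asymptotic_radius y w + dist w u"
  unfolding asymptotic_radius_def
  using dist_seq_bounds[OF assms(1)] dist_seq_bounds[OF assms(2)]
  by (intro real_limsup_le_add[where A=0 and B="pi/2"]) (auto intro: dist_triangle)

lemma asymptotic_radius_cos_midpoint:
  assumes cat: "CAT1 X" and u: "u \<in> X" and v: "v \<in> X"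
  shows "\<exists>m\<in>X. cos (asymptotic_radius y u) + cos (asymptotic_radius y v)
                \<le> 2 * cos (dist u v / 2) * cos (asymptotic_radius y m)"
proof -
  obtain m where m: "m \<in> X" and mid: "\<And>z. z \<in> X \<Longrightarrow>
      cos (dist u z) + cos (dist v z) \<le> 2 * cos (dist u v / 2) * cos (dist m z)"
    using cat1_cos_midpoint_ineq[OF cat adm u v] by blast
  define C where "C = cos (dist u v / 2)"
  have C: "0 \<le> C" "C \<le> 1"
    using admissible_dist_le[OF adm u v] zero_le_dist[of u v] pi_gt_zero
    unfolding C_def by (intro cos_ge_zero; linarith) simp
  have bounds: "\<And>w n. w \<in> X \<Longrightarrow> 0 \<le> dist (y n) w \<and> dist (y n) w \<le> pi"
  proof -
    fix w n assume "w \<in> X"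
    then show "0 \<le> dist (y n) w \<and> dist (y n) w \<le> pi" using dist_seq_bounds[of w n] pi_gt_zero by linarith
  qed
  have "cos (asymptotic_radius y u) + cos (asymptotic_radius y v)
        \<le> 2 * C * cos (asymptotic_radius y m) + e" if e: "e > 0" for e
  proof -
    have "eventually (\<lambda>n. cos (asymptotic_radius y u) - e/4 \<le> cos (dist (y n) u) \<and>
        cos (asymptotic_radius y v) - e/4 \<le> cos (dist (y n) v)) sequentially"
      using e bounds[OF u] bounds[OF v] unfolding asymptotic_radius_def
      by (intro eventually_conj eventually_cos_real_limsup_le) auto
    then obtain N where N: "\<And>n. n \<ge> N \<Longrightarrow> cos (asymptotic_radius y u) - e/4 \<le> cos (dist (y n) u) \<and>
        cos (asymptotic_radius y v) - e/4 \<le> cos (dist (y n) v)"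
      by (auto simp: eventually_sequentially)
    obtain n where n: "n \<ge> N" "cos (dist (y n) m) \<le> cos (asymptotic_radius y m) + e/4"
      using exists_cos_le_cos_real_limsup[where f="\<lambda>n. dist (y n) m" and e="e/4"] bounds[OF m] e
      unfolding asymptotic_radius_def by auto
    have "cos (asymptotic_radius y u) + cos (asymptotic_radius y v) - e/2
          \<le> cos (dist u (y n)) + cos (dist v (y n))"
      using N[OF n(1)] by (simp add: dist_commute)
    also have "\<dots> \<le> 2 * C * cos (dist m (y n))" using mid y by (auto simp: C_def)
    also have "\<dots> \<le> 2 * C * (cos (asymptotic_radius y m) + e/4)"
      using n(2) C by (intro mult_left_mono) (auto simp: dist_commute)
    also have "\<dots> \<le> 2 * C * cos (asymptotic_radius y m) + e/2"
      using C e by (simp add: algebra_simps)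
    finally show ?thesis by linarith
  qed
  then show ?thesis using m by (auto intro: field_le_epsilon simp: C_def)
qed

lemma almost_minimizers_cos_half_dist:
  assumes cat: "CAT1 X" and u: "u \<in> X" and v: "v \<in> X"
    and lower: "\<And>w. w \<in> X \<Longrightarrow> \<rho> \<le> asymptotic_radius y w" and "0 \<le> \<rho>"
    and "asymptotic_radius y u \<le> \<rho> + \<eta>" "asymptotic_radius y v \<le> \<rho> + \<eta>"
  shows "cos \<rho> * (1 - cos (dist u v / 2)) \<le> \<eta>"
proof -
  obtain m where m: "m \<in> X" and mid: "cos (asymptotic_radius y u) + cos (asymptotic_radius y v)
      \<le> 2 * cos (dist u v / 2) * cos (asymptotic_radius y m)"
    using asymptotic_radius_cos_midpoint[OF cat u v] by blast
  have "cos (asymptotic_radius y m) \<le> cos \<rho>"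
    using lower[OF m] \<open>0 \<le> \<rho>\<close> asymptotic_radius_le[OF m] pi_gt_zero
    by (intro cos_monotone_0_pi_le) linarith+
  moreover have "0 \<le> cos (dist u v / 2)"
    using admissible_dist_le[OF adm u v] zero_le_dist[of u v] pi_gt_zero
    by (intro cos_ge_zero) linarith+
  ultimately have "2 * cos (dist u v / 2) * cos (asymptotic_radius y m) \<le> 2 * cos (dist u v / 2) * cos \<rho>"
    by (simp add: mult_left_mono)
  moreover have "cos \<rho> - \<eta> \<le> cos (asymptotic_radius y u)" "cos \<rho> - \<eta> \<le> cos (asymptotic_radius y v)"
    using abs_cos_diff_le[of \<rho> "asymptotic_radius y u"] abs_cos_diff_le[of \<rho> "asymptotic_radius y v"]
      assms lower[OF u] lower[OF v] by linarith+
  ultimately show ?thesis using mid by (simp add: algebra_simps)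
qed

lemma asymptotic_center_unique:
  assumes cat: "CAT1 X" and q: "q \<in> X" "asymptotic_radius y q < pi/2"
    and z1: "z1 \<in> asymptotic_center X y" and z2: "z2 \<in> asymptotic_center X y"
  shows "z1 = z2"
proof -
  define \<rho> where "\<rho> = asymptotic_radius y z1"
  have Z: "z1 \<in> X" "z2 \<in> X" "\<And>w. w \<in> X \<Longrightarrow> \<rho> \<le> asymptotic_radius y w" "asymptotic_radius y z2 \<le> \<rho>"
    using z1 z2 unfolding asymptotic_center_eq_minimizers \<rho>_def by auto
  have "0 \<le> \<rho>" "\<rho> < pi/2"
    using asymptotic_radius_nonneg[OF Z(1)] Z(3)[OF q(1)] q(2) by (auto simp: \<rho>_def)
  then have "0 < cos \<rho>" by (intro cos_gt_zero_pi) auto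
  moreover have "cos \<rho> * (1 - cos (dist z1 z2 / 2)) \<le> 0"
    using almost_minimizers_cos_half_dist[OF cat Z(1,2,3) \<open>0 \<le> \<rho>\<close>, of 0] Z(4) by (simp add: \<rho>_def)
  ultimately have "1 \<le> cos (dist z1 z2 / 2)" by (simp add: mult_le_0_iff)
  moreover have "dist z1 z2 / 2 \<le> pi" using admissible_dist_le[OF adm Z(1,2)] pi_gt_zero by linarith
  ultimately show ?thesis
    using cos_monotone_0_pi[of 0 "dist z1 z2 / 2"] by (cases "dist z1 z2 = 0") auto
qed

lemma asymptotic_center_singleton:
  assumes cat: "CAT1 X" and cpl: "complete X" and q: "q \<in> X" "asymptotic_radius y q < pi/2"
  shows "\<exists>z. asymptotic_center X y = {z}"
proof -
  define r where "r = asymptotic_radius y"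
  define \<rho> where "\<rho> = Inf (r ` X)"
  have bdd: "bdd_below (r ` X)"
    using asymptotic_radius_nonneg by (auto simp: r_def intro: bdd_belowI[where m=0])
  have lower: "\<And>w. w \<in> X \<Longrightarrow> \<rho> \<le> r w" using bdd by (auto simp: \<rho>_def intro: cInf_lower)
  have "0 \<le> \<rho>" using q asymptotic_radius_nonneg by (auto simp: \<rho>_def r_def intro: cInf_greatest)
  moreover have "\<rho> < pi/2" using lower[OF q(1)] q(2) by (simp add: r_def)
  ultimately have cos_pos: "0 < cos \<rho>" by (intro cos_gt_zero_pi) auto
  have "\<exists>w\<in>X. r w < \<rho> + 1 / real (Suc k)" for k
    using cInf_lessD[of "r ` X" "\<rho> + 1 / real (Suc k)"] q by (auto simp: \<rho>_def)
  then obtain u where u: "\<And>k. u k \<in> X" "\<And>k. r (u k) < \<rho> + 1 / real (Suc k)"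
    by metis
  have "1 - cos (dist (u j) (u k) / 2) \<le> (1 / cos \<rho>) / real (Suc N)" if "N \<le> j" "N \<le> k" for N j k
  proof -
    have "1 / real (Suc j) \<le> 1 / real (Suc N)" "1 / real (Suc k) \<le> 1 / real (Suc N)"
      using that by (auto simp: divide_simps)
    then have "r (u j) \<le> \<rho> + 1 / real (Suc N)" "r (u k) \<le> \<rho> + 1 / real (Suc N)"
      using u(2)[of j] u(2)[of k] by linarith+
    then have "cos \<rho> * (1 - cos (dist (u j) (u k) / 2)) \<le> 1 / real (Suc N)"
      using u(1) \<open>0 \<le> \<rho>\<close> lower
      by (intro almost_minimizers_cos_half_dist[OF cat]) (auto simp: r_def)
    then have "1 - cos (dist (u j) (u k) / 2) \<le> (1 / real (Suc N)) / cos \<rho>"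
      using cos_pos by (simp add: pos_le_divide_eq mult_ac)
    then show ?thesis by (simp add: mult.commute)
  qed
  moreover have "dist (u j) (u k) \<le> pi" for j k
    using admissible_dist_le[OF adm u(1)[of j] u(1)[of k]] pi_gt_zero by linarith
  ultimately have "Cauchy u" by (intro Cauchy_if_one_minus_cos_half_dist_le)
  then obtain l where l: "l \<in> X" "u \<longlonglongrightarrow> l" using cpl u(1) unfolding complete_def by blast
  have "(\<lambda>k. \<rho> + 1 / real (Suc k) + dist (u k) l) \<longlonglongrightarrow> \<rho> + 0 + 0"
    using l(2) by (intro tendsto_intros LIMSEQ_Suc[OF lim_const_over_n] tendsto_dist_iff[THEN iffD1])
  moreover have "r l \<le> \<rho> + 1 / real (Suc k) + dist (u k) l" for k
    using asymptotic_radius_le_add_dist[OF l(1) u(1)[of k]] u(2)[of k] by (simp add: r_def)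
  ultimately have "r l \<le> \<rho>" by (intro LIMSEQ_le_const) auto
  then have "l \<in> asymptotic_center X y"
    using l(1) lower unfolding asymptotic_center_eq_minimizers r_def by force
  then show ?thesis using asymptotic_center_unique[OF cat q] by blast
qed

end

lemma asymptotic_radius_subseq:
  assumes "convergent (\<lambda>n. dist (y n) p)" "strict_mono r"
  shows "asymptotic_radius (y \<circ> r) p = asymptotic_radius y p"
proof -
  obtain L where L: "(\<lambda>n. dist (y n) p) \<longlonglongrightarrow> L" using assms(1) by (auto simp: convergent_def)
  then have "(\<lambda>n. dist ((y \<circ> r) n) p) \<longlonglongrightarrow> L"
    using LIMSEQ_subseq_LIMSEQ[OF L assms(2)] by (simp add: comp_def)
  with L show ?thesis by (simp add: asymptotic_radius_def real_limsup_eq_lim)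
qed

lemma Delta_convergent_if_dist_convergent:
  assumes adm: "admissible X" and y: "range y \<subseteq> X"
    and conv: "\<And>p. p \<in> F \<Longrightarrow> convergent (\<lambda>n. dist (y n) p)"
    and sub: "\<And>r. strict_mono r \<Longrightarrow> \<exists>z\<in>F. asymptotic_center X (y \<circ> r) = {z}"
  shows "\<exists>p\<in>F. Delta_convergent X y p"
proof -
  obtain p where p: "p \<in> F" "asymptotic_center X y = {p}" using sub[OF strict_mono_id] by auto
  then have p_min: "p \<in> X" "\<And>w. w \<in> X \<Longrightarrow> asymptotic_radius y p \<le> asymptotic_radius y w"
    unfolding asymptotic_center_eq_minimizers[OF adm y] by auto
  have "asymptotic_center X (y \<circ> r) = {p}" if r: "strict_mono r" for r
  proof -
    have yr: "range (y \<circ> r) \<subseteq> X" using y by auto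
    obtain z where z: "z \<in> F" "asymptotic_center X (y \<circ> r) = {z}" using sub[OF r] by blast
    then have z_min: "z \<in> X" "\<And>w. w \<in> X \<Longrightarrow> asymptotic_radius (y \<circ> r) z \<le> asymptotic_radius (y \<circ> r) w"
      unfolding asymptotic_center_eq_minimizers[OF adm yr] by auto
    have "asymptotic_radius (y \<circ> r) p \<le> asymptotic_radius (y \<circ> r) z"
      using p_min(2)[OF z_min(1)] asymptotic_radius_subseq[OF conv r] p(1) z(1) by simp
    then have "p \<in> asymptotic_center X (y \<circ> r)"
      using p_min(1) z_min unfolding asymptotic_center_eq_minimizers[OF adm yr] by force
    with z(2) show ?thesis by auto
  qed
  with p(1) show ?thesis unfolding Delta_convergent_def by blast
qed

section \<open>Firmly vicinal mappings\<close>

lemma firmly_vicinalD: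
  assumes "firmly_vicinal X T" "x \<in> X" "y \<in> X"
  shows "cos (dist (T x) x)^2 * (1 + cos (dist (T y) y)^2) * cos (dist (T x) y)
       + cos (dist (T y) y)^2 * (1 + cos (dist (T x) x)^2) * cos (dist (T y) x)
      \<le> (cos (dist (T x) x)^2 * (1 + cos (dist (T y) y)^2) * cos (dist (T y) y)
         + cos (dist (T y) y)^2 * (1 + cos (dist (T x) x)^2) * cos (dist (T x) x))
        * cos (dist (T x) (T y))"
  using assms unfolding firmly_vicinal_def Let_def by blast

lemma firmly_vicinal_fixed_point_ineq:
  assumes "firmly_vicinal X T" "y \<in> X" "q \<in> X" "T q = q"
  shows "cos (dist y q) \<le> cos (dist (T y) y) * cos (dist (T y) q)"
proof -
  define C where "C = cos (dist (T y) y)"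
  have "(1 + C^2) * cos (dist y q) \<le> (1 + C^2) * (C * cos (dist (T y) q))"
    using firmly_vicinalD[OF assms(1-3)] assms(4) by (simp add: C_def dist_commute algebra_simps)
  moreover have "0 < 1 + C^2" by (simp add: add_pos_nonneg)
  ultimately show ?thesis by (simp add: C_def)
qed

lemma firmly_vicinal_dist_fixed_point_le:
  assumes "admissible X" "T ` X \<subseteq> X" "firmly_vicinal X T" "y \<in> X" "q \<in> X" "T q = q"
  shows "dist (T y) q \<le> dist y q"
proof -
  have Ty: "T y \<in> X" using assms by auto
  have "0 \<le> cos (dist (T y) q)"
    using admissible_dist_le[OF assms(1) Ty assms(5)] zero_le_dist[of "T y" q] pi_gt_zero
    by (intro cos_ge_zero) linarith+
  then have "cos (dist (T y) y) * cos (dist (T y) q) \<le> cos (dist (T y) q)"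
    using mult_right_mono[OF cos_le_one[of "dist (T y) y"]] by simp
  then have "cos (dist y q) \<le> cos (dist (T y) q)"
    using firmly_vicinal_fixed_point_ineq[OF assms(3-6)] by linarith
  moreover have "dist y q \<le> pi" "dist (T y) q \<le> pi"
    using admissible_dist_le_pi[OF assms(1)] assms Ty by auto
  ultimately show ?thesis using cos_mono_le_eq by simp
qed

text \<open>The defining inequality at \<open>(y, z)\<close>, read with \<open>a = C\<^sub>y\<close>, \<open>c = C\<^sub>z\<close> and the cosines
  \<open>P, Q, R\<close> of \<open>d(Ty,Tz)\<close>, \<open>d(Ty,z)\<close>, \<open>d(Tz,y)\<close>: when \<open>y\<close> is almost fixed, \<open>Q\<close> is
  almost at most \<open>P\<close>.\<close>

lemma firmly_vicinal_arith:
  fixes a c P Q R e :: real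
  assumes a: "1/2 \<le> a" "a \<le> 1" and c: "0 < c" "c \<le> 1" and P: "0 \<le> P" "P \<le> 1"
    and "P - R \<le> e" "0 \<le> e"
    and fv: "a^2 * (1 + c^2) * Q + c^2 * (1 + a^2) * R \<le> (a^2 * (1 + c^2) * c + c^2 * (1 + a^2) * a) * P"
  shows "Q \<le> P + 8 * e"
proof -
  define A where "A = a^2 * (1 + c^2)"
  define B where "B = c^2 * (1 + a^2)"
  have "(1/2)^2 \<le> a^2" using a by (intro power_mono) auto
  then have "1/4 * 1 \<le> a^2 * (1 + c^2)" by (intro mult_mono) (auto simp: power2_eq_square)
  then have A: "1/4 \<le> A" by (simp add: A_def)
  have "c^2 \<le> 1" "1 + a^2 \<le> 2" using a c by (auto simp: power_le_one abs_square_le_1)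
  then have B: "0 \<le> B" "B \<le> 2" unfolding B_def using mult_mono[of "c^2" 1 "1 + a^2" 2] by simp_all
  have "A * Q \<le> A * (c * P) + B * (a * P - R)" using fv unfolding A_def B_def by (simp add: algebra_simps)
  also have "A * (c * P) \<le> A * P" using A c P by (intro mult_left_mono) (auto simp: mult_left_le_one_le)
  also have "B * (a * P - R) \<le> B * e"
    using B mult_left_le_one_le[OF P(1) _ a(2)] a \<open>P - R \<le> e\<close> by (intro mult_left_mono) auto
  also have "B * e \<le> 2 * e" using B \<open>0 \<le> e\<close> by (intro mult_right_mono) auto
  finally have "A * (Q - P) \<le> 2 * e" by (simp add: algebra_simps)
  moreover have "Q \<le> P \<or> 1/4 * (Q - P) \<le> A * (Q - P)" using mult_right_mono[OF A, of "Q - P"] by linarith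
  ultimately show ?thesis using \<open>0 \<le> e\<close> by auto
qed

lemma firmly_vicinal_cos_dist_le:
  assumes adm: "admissible X" and TX: "T ` X \<subseteq> X" and fv: "firmly_vicinal X T"
    and y: "y \<in> X" and z: "z \<in> X" and small: "dist (T y) y \<le> pi/3"
  shows "cos (dist y z) \<le> cos (dist y (T z)) + 10 * dist (T y) y"
proof -
  define e where "e = dist (T y) y"
  have "T y \<in> X" "T z \<in> X" using TX y z by auto
  have "cos (pi/3) \<le> cos e" using small by (intro cos_monotone_0_pi_le) (auto simp: e_def)
  then have a: "1/2 \<le> cos e" "cos e \<le> 1" by (simp_all add: cos_60)
  have "dist (T z) z < pi/2" using adm \<open>T z \<in> X\<close> z unfolding admissible_def by blast
  then have "0 < cos (dist (T z) z)"
    using zero_le_dist[of "T z" z] pi_gt_zero by (intro cos_gt_zero_pi) linarith+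
  moreover have "0 \<le> cos (dist (T y) (T z))"
    using admissible_dist_le[OF adm \<open>T y \<in> X\<close> \<open>T z \<in> X\<close>] zero_le_dist[of "T y" "T z"] pi_gt_zero
    by (intro cos_ge_zero) linarith+
  moreover have "cos (dist (T y) (T z)) - cos (dist (T z) y) \<le> e"
    using cos_dist_diff_le[of "T y" "T z" y] by (simp add: e_def dist_commute)
  ultimately have "cos (dist (T y) z) \<le> cos (dist (T y) (T z)) + 8 * e"
    using firmly_vicinal_arith[OF a _ cos_le_one] firmly_vicinalD[OF fv y z] by (simp add: e_def)
  moreover have "cos (dist y z) \<le> cos (dist (T y) z) + e"
    using cos_dist_diff_le[of y z "T y"] by (simp add: e_def dist_commute)
  moreover have "cos (dist (T y) (T z)) \<le> cos (dist y (T z)) + e"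
    using cos_dist_diff_le[of "T y" "T z" y] by (simp add: e_def dist_commute)
  ultimately show ?thesis by (simp add: e_def)
qed

lemma asymptotic_center_fixed_point:
  assumes adm: "admissible X" and TX: "T ` X \<subseteq> X" and fv: "firmly_vicinal X T"
    and y: "range y \<subseteq> X" and reg: "(\<lambda>n. dist (T (y n)) (y n)) \<longlonglongrightarrow> 0"
    and AC: "asymptotic_center X y = {z}"
  shows "T z = z"
proof -
  have z: "z \<in> X" "\<And>w. w \<in> X \<Longrightarrow> asymptotic_radius y z \<le> asymptotic_radius y w"
    using AC unfolding asymptotic_center_eq_minimizers[OF adm y] by auto
  have Tz: "T z \<in> X" using TX z(1) by auto
  have "asymptotic_radius y (T z) \<le> asymptotic_radius y z"
    unfolding asymptotic_radius_def
  proof (rule real_limsup_le_if_eventually_cos_le)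
    fix n
    show "0 \<le> dist (y n) (T z)" "dist (y n) (T z) \<le> pi" "0 \<le> dist (y n) z" "dist (y n) z \<le> pi"
      using admissible_dist_le_pi[OF adm] y Tz z(1) by (auto simp: image_subset_iff)
  next
    fix e :: real assume "0 < e"
    then have "eventually (\<lambda>n. dist (T (y n)) (y n) < min (pi/3) (e/10)) sequentially"
      using reg pi_gt_zero by (intro order_tendstoD(2)) auto
    then show "eventually (\<lambda>n. cos (dist (y n) z) \<le> cos (dist (y n) (T z)) + e) sequentially"
    proof (rule eventually_mono)
      fix n assume "dist (T (y n)) (y n) < min (pi/3) (e/10)"
      then show "cos (dist (y n) z) \<le> cos (dist (y n) (T z)) + e"
        using firmly_vicinal_cos_dist_le[OF adm TX fv _ z(1), of "y n"] y by (auto simp: image_subset_iff)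
    qed
  qed
  then have "T z \<in> asymptotic_center X y"
    using Tz z unfolding asymptotic_center_eq_minimizers[OF adm y] by force
  then show ?thesis using AC by blast
qed

lemma orbit_in: "T ` X \<subseteq> X \<Longrightarrow> x \<in> X \<Longrightarrow> (T ^^ n) x \<in> X"
  by (induction n) auto

context
  fixes X :: "'a::metric_space set" and T :: "'a \<Rightarrow> 'a" and x :: 'a
  assumes adm: "admissible X" and TX: "T ` X \<subseteq> X" and fv: "firmly_vicinal X T" and x: "x \<in> X"
begin

lemma firmly_vicinal_orbit_dist_decseq:
  assumes "q \<in> Fix X T"
  shows "decseq (\<lambda>n. dist ((T ^^ n) x) q)"
  using firmly_vicinal_dist_fixed_point_le[OF adm TX fv orbit_in[OF TX x]] assms
  by (intro decseq_SucI) (auto simp: Fix_def)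

lemma firmly_vicinal_orbit_asymptotically_regular:
  assumes q: "q \<in> Fix X T"
  shows "(\<lambda>n. dist (T ((T ^^ n) x)) ((T ^^ n) x)) \<longlonglongrightarrow> 0"
proof -
  have qX: "q \<in> X" "T q = q" using q by (auto simp: Fix_def)
  have dist_orbit: "0 \<le> dist ((T ^^ n) x) q" "dist ((T ^^ n) x) q < pi/2" for n
    using adm orbit_in[OF TX x] qX unfolding admissible_def by auto
  obtain L where L: "(\<lambda>n. dist ((T ^^ n) x) q) \<longlonglongrightarrow> L" "\<And>n. L \<le> dist ((T ^^ n) x) q"
    using decseq_convergent[OF firmly_vicinal_orbit_dist_decseq[OF q], of 0] dist_orbit by blast
  show ?thesis
  proof (rule tendsto_zero_if_cos_le_cos_mult_cos[OF L(1)])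
    show "0 < cos L"
      using L(2)[of 0] dist_orbit[of 0] LIMSEQ_le_const[OF L(1), of 0] dist_orbit(1)
      by (intro cos_gt_zero_pi) auto
    show "0 < cos (dist ((T ^^ n) x) q)" for n
      using dist_orbit[of n] pi_gt_zero by (intro cos_gt_zero_pi) linarith+
    show "0 \<le> dist (T ((T ^^ n) x)) ((T ^^ n) x)" "dist (T ((T ^^ n) x)) ((T ^^ n) x) \<le> pi" for n
      using admissible_dist_le_pi[OF adm] orbit_in[OF TX x] TX by (auto simp: image_subset_iff)
    show "cos (dist ((T ^^ n) x) q)
          \<le> cos (dist (T ((T ^^ n) x)) ((T ^^ n) x)) * cos (dist ((T ^^ Suc n) x) q)" for n
      using firmly_vicinal_fixed_point_ineq[OF fv orbit_in[OF TX x] qX] by simp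
  qed
qed

lemma firmly_vicinal_orbit_dist_convergent:
  assumes "q \<in> Fix X T"
  shows "convergent (\<lambda>n. dist ((T ^^ n) x) q)"
  using decseq_convergent[OF firmly_vicinal_orbit_dist_decseq[OF assms], of 0]
  by (auto simp: convergent_def)

lemma firmly_vicinal_orbit_subseq_asymptotic_center:
  assumes cat: "CAT1 X" and cpl: "complete X" and q: "q \<in> Fix X T" and r: "strict_mono r"
  shows "\<exists>z\<in>Fix X T. asymptotic_center X ((\<lambda>n. (T ^^ n) x) \<circ> r) = {z}"
proof -
  define y where "y = (\<lambda>n. (T ^^ n) x) \<circ> r"
  have y: "range y \<subseteq> X" using orbit_in[OF TX x] by (auto simp: y_def)
  have qX: "q \<in> X" using q by (simp add: Fix_def)
  have "dist (y n) q \<le> dist x q" for n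
    using firmly_vicinal_orbit_dist_decseq[OF q] unfolding y_def decseq_def
    by (metis comp_apply funpow_0 le0)
  then have "asymptotic_radius y q \<le> dist x q"
    unfolding asymptotic_radius_def by (intro real_limsup_le[where A=0]) auto
  also have "dist x q < pi/2" using adm x qX by (simp add: admissible_def)
  finally obtain z where z: "asymptotic_center X y = {z}"
    using asymptotic_center_singleton[OF adm y cat cpl qX] by blast
  have "(\<lambda>n. dist (T (y n)) (y n)) \<longlonglongrightarrow> 0"
    using LIMSEQ_subseq_LIMSEQ[OF firmly_vicinal_orbit_asymptotically_regular[OF q] r]
    by (simp add: y_def comp_def)
  then have "T z = z" by (rule asymptotic_center_fixed_point[OF adm TX fv y _ z])
  moreover have "z \<in> X" using z asymptotic_center_eq_minimizers[OF adm y] by auto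
  ultimately show ?thesis using z by (auto simp: Fix_def y_def)
qed

end

theorem theorem4p5:
  fixes X :: "'a::metric_space set" and T :: "'a \<Rightarrow> 'a" and x :: 'a
  assumes "CAT1 X" and "admissible X" and "complete X"
    and "T ` X \<subseteq> X" and "firmly_vicinal X T"
    and "Fix X T \<noteq> {}" and "x \<in> X"
  shows "\<exists>p\<in>Fix X T. Delta_convergent X (\<lambda>n. (T ^^ n) x) p"
proof (rule Delta_convergent_if_dist_convergent)
  show "range (\<lambda>n. (T ^^ n) x) \<subseteq> X" using orbit_in[OF assms(4,7)] by auto
  obtain q where "q \<in> Fix X T" using assms(6) by blast
  then show "\<exists>z\<in>Fix X T. asymptotic_center X ((\<lambda>n. (T ^^ n) x) \<circ> r) = {z}" if "strict_mono r" for r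
    using firmly_vicinal_orbit_subseq_asymptotic_center[OF assms(2,4,5,7,1,3) _ that] by blast
qed (use assms firmly_vicinal_orbit_dist_convergent[OF assms(2,4,5,7)] in auto)

end
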